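(* Let $m\in\mathbb{N}$, $\alpha\in[0,1]$, and let $V$ be a 1-periodic complex-valued distribution with $V\in H_{+}^{-m\alpha}$. Let $S_{\pm}(V)=D_{\pm}^{2m}\dotplus V(x)$ be the form-sum operators on $L_2(0,1)$, i.e. the $m$-sectorial operators associated with the closed sectorial forms $t_\pm[u,v]=\langle D_{\pm}^{2m}u,v\rangle_{\pm}+\langle V(x)u,v\rangle_{\pm}$, $\mathrm{Dom}(t_\pm)=H_\pm^m$; equivalently $\mathrm{Dom}(S_{\pm})=\{u\in H_{\pm}^{m}\mid D_{\pm}^{2m}u+V(x)u\in L_{2}(0,1)\}$, $S_\pm(V)u=D_{\pm}^{2m}u+V(x)u$. Then $$\mathrm{Dom}(S_{\pm})\subseteq H_{\pm}^{m(2-\alpha)}.$$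
   Context: For $s\in\mathbb{R}$, $H_{+}^{s}$ is the space of formal series $f=\sum_{k\in\mathbb{Z}}\widehat f(2k)e^{i2k\pi x}$ with $\|f\|_{H_+^s}^2=\sum_k\langle 2k\rangle^{2s}|\widehat f(2k)|^2<\infty$, and $H_{-}^{s}$ is the space of formal series $f=\sum_{k}\widehat f(2k+1)e^{i(2k+1)\pi x}$ with $\|f\|_{H_-^s}^2=\sum_k\langle 2k+1\rangle^{2s}|\widehat f(2k+1)|^2<\infty$, where $\langle k\rangle=1+|k|$; $H_\pm^0=L_2(0,1)$. $\langle\cdot,\cdot\rangle_{\pm}$ is the pairing between $H_\pm^{s}$ and $H_\pm^{-s}$ extending the $L_2(0,1)$ inner product. $D_{\pm}=-i\,d/dx$ on $H_\pm^1$ and $D_\pm^{2m}=|D_\pm|^{2m}$ (multiplication by $(n\pi)^{2m}$ on the Fourier mode $e^{in\pi x}$), extended to all $H^s_\pm$. For $V\in H_+^{-m}$ and $u\in H_\pm^{m}$, $V(x)u=\sum_n\big(\sum_j\widehat V(n-j)\widehat u(j)\big)e^{in\pi x}\in H_\pm^{-m}$ is the formal product of Fourier series. Note $H_+^{-m\alpha}\subseteq H_+^{-m}$, so the operators are well defined. *)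

theory Defs
  imports "HOL-Analysis.Analysis"
begin

text \<open>Elements of H^s_+ / H^s_- are represented by their Fourier coefficient functions
  f :: int => complex, where f n is the coefficient of exp(i n pi x).
  The boolean pm selects the sign: True = plus (even frequencies), False = minus (odd).\<close>

definition jbr :: "int \<Rightarrow> real" where
  "jbr k = 1 + real_of_int \<bar>k\<bar>"

definition freqs :: "bool \<Rightarrow> int set" where
  "freqs pm = (if pm then {n. even n} else {n. odd n})"

definition Hsp :: "bool \<Rightarrow> real \<Rightarrow> (int \<Rightarrow> complex) set" where
  "Hsp pm s = {f. (\<forall>n. n \<notin> freqs pm \<longrightarrow> f n = 0) \<and>
      (\<lambda>n. jbr n powr (2 * s) * (cmod (f n))\<^sup>2) summable_on freqs pm}"

definition Dpow :: "nat \<Rightarrow> (int \<Rightarrow> complex) \<Rightarrow> (int \<Rightarrow> complex)" where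
  "Dpow m u = (\<lambda>n. complex_of_real ((real_of_int n * pi) ^ (2 * m)) * u n)"

definition fmult :: "(int \<Rightarrow> complex) \<Rightarrow> (int \<Rightarrow> complex) \<Rightarrow> (int \<Rightarrow> complex)" where
  "fmult V u = (\<lambda>n. \<Sum>\<^sub>\<infinity>j. V (n - j) * u j)"

definition DomS :: "bool \<Rightarrow> nat \<Rightarrow> (int \<Rightarrow> complex) \<Rightarrow> (int \<Rightarrow> complex) set" where
  "DomS pm m V = {u \<in> Hsp pm (real m). (\<lambda>n. Dpow m u n + fmult V u n) \<in> Hsp pm 0}"

end

theory Submission
  imports Defs "HOL-Library.Nat_Bijection"
begin

(*
  Put a = m * alpha and <n> = 1 + |n|.  For u in the domain, D^{2m} u = g - V u with g in L_2, and
  the symbol (n pi)^{2m} is comparable to <n>^{2m}; so it suffices that V u lies in H^{-a}.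
  Write |V(k)| = A(k) <k>^a and |u(j)| = U(j) <j>^{-m} with A, U square summable.  Peetre's
  inequality <n - j>^a <= 2^a max(<n>, <j>)^a bounds <n>^{-a} |(V u)(n)| by the convolution
  sum_j A(n - j) U(j) <j>^{-m}, which is square summable by Cauchy-Schwarz and Young because
  m > 1/2, plus the tail <n>^{-a} sum_{|j| > |n|} A(n - j) U(j) <j>^{a - m}.  The tail is controlled
  by the summability of <n>^{-2a} when a > 1/2, and otherwise by the fact that each j lies above
  at most 2 <j> <= <j>^{2m - 2a} indices n.
*)

section \<open>Weighted sums over the integers\<close>

lemma Cauchy_Schwarz_infsum:
  fixes x y :: "'a \<Rightarrow> real"
  assumes x0: "\<And>j. x j \<ge> 0" and y0: "\<And>j. y j \<ge> 0"
    and xs: "(\<lambda>j. (x j)\<^sup>2) summable_on A" and ys: "(\<lambda>j. (y j)\<^sup>2) summable_on A"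
  shows "(\<lambda>j. x j * y j) summable_on A"
    and "(\<Sum>\<^sub>\<infinity>j\<in>A. x j * y j)\<^sup>2 \<le> (\<Sum>\<^sub>\<infinity>j\<in>A. (x j)\<^sup>2) * (\<Sum>\<^sub>\<infinity>j\<in>A. (y j)\<^sup>2)"
proof -
  show xy: "(\<lambda>j. x j * y j) summable_on A"
  proof (rule summable_on_comparison_test)
    show "(\<lambda>j. ((x j)\<^sup>2 + (y j)\<^sup>2) / 2) summable_on A"
      using summable_on_cmult_left[OF summable_on_add[OF xs ys], of "1/2"] by simp
    show "x j * y j \<le> ((x j)\<^sup>2 + (y j)\<^sup>2) / 2" for j
      using sum_squares_bound[of "x j" "y j"] by simp
  qed (use x0 y0 in simp)
  define X where "X = (\<Sum>\<^sub>\<infinity>j\<in>A. (x j)\<^sup>2)"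
  define Y where "Y = (\<Sum>\<^sub>\<infinity>j\<in>A. (y j)\<^sup>2)"
  have "X \<ge> 0" "Y \<ge> 0" by (simp_all add: X_def Y_def infsum_nonneg)
  have "(\<Sum>\<^sub>\<infinity>j\<in>A. x j * y j) \<le> sqrt (X * Y)"
  proof (rule infsum_le_finite_sums[OF xy])
    fix F assume F: "finite F" "F \<subseteq> A"
    have "(\<Sum>j\<in>F. x j * y j)\<^sup>2 \<le> (\<Sum>j\<in>F. (x j)\<^sup>2) * (\<Sum>j\<in>F. (y j)\<^sup>2)"
      by (rule Cauchy_Schwarz_ineq_sum)
    also have "\<dots> \<le> X * Y"
      unfolding X_def Y_def
      by (intro mult_mono finite_sum_le_infsum xs ys F) (auto intro: sum_nonneg infsum_nonneg)
    finally show "(\<Sum>j\<in>F. x j * y j) \<le> sqrt (X * Y)"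
      by (rule real_le_rsqrt)
  qed
  moreover have "0 \<le> (\<Sum>\<^sub>\<infinity>j\<in>A. x j * y j)"
    using x0 y0 by (simp add: infsum_nonneg)
  ultimately show "(\<Sum>\<^sub>\<infinity>j\<in>A. x j * y j)\<^sup>2 \<le> X * Y"
    using \<open>X \<ge> 0\<close> \<open>Y \<ge> 0\<close> by (metis power_mono real_sqrt_pow2 mult_nonneg_nonneg)
qed

lemma summable_on_infsum_nonneg_swap:
  fixes F :: "'a \<Rightarrow> 'b \<Rightarrow> real"
  assumes nonneg: "\<And>x y. F x y \<ge> 0"
    and inner: "\<And>y. (\<lambda>x. F x y) summable_on UNIV"
    and outer: "(\<lambda>y. \<Sum>\<^sub>\<infinity>x. F x y) summable_on UNIV"
  shows "(\<lambda>x. \<Sum>\<^sub>\<infinity>y. F x y) summable_on UNIV"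
proof -
  have "(\<lambda>(y, x). F x y) summable_on UNIV \<times> UNIV"
    using summable_on_SigmaI[where f = "\<lambda>(y, x). F x y" and A = UNIV and B = "\<lambda>_. UNIV"
        and g = "\<lambda>y. \<Sum>\<^sub>\<infinity>x. F x y"] inner outer nonneg by auto
  then have F: "(\<lambda>(x, y). F x y) summable_on UNIV \<times> UNIV"
    by (subst summable_on_swap) simp
  show ?thesis
    using summable_on_SigmaD[OF F[unfolded case_prod_unfold]] summable_on_SigmaD1[OF F] by simp
qed

lemma int_shift_summable_on:
  fixes f :: "int \<Rightarrow> 'a::{comm_monoid_add, t2_space}"
  assumes "f summable_on UNIV"
  shows "(\<lambda>k. f (n - k)) summable_on UNIV" "(\<Sum>\<^sub>\<infinity>k. f (n - k)) = infsum f UNIV"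
    and "(\<lambda>k. f (k - n)) summable_on UNIV" "(\<Sum>\<^sub>\<infinity>k. f (k - n)) = infsum f UNIV"
proof -
  have reflect: "bij_betw (\<lambda>k. n - k) UNIV UNIV"
    by (rule bij_betwI[where g = "\<lambda>k. n - k"]) auto
  have shift: "bij_betw (\<lambda>k. k - n) UNIV UNIV"
    by (rule bij_betwI[where g = "\<lambda>k. k + n"]) auto
  show "(\<lambda>k. f (n - k)) summable_on UNIV" "(\<Sum>\<^sub>\<infinity>k. f (n - k)) = infsum f UNIV"
    using summable_on_reindex_bij_betw[OF reflect, of f] infsum_reindex_bij_betw[OF reflect, of f]
      assms by simp_all
  show "(\<lambda>k. f (k - n)) summable_on UNIV" "(\<Sum>\<^sub>\<infinity>k. f (k - n)) = infsum f UNIV"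
    using summable_on_reindex_bij_betw[OF shift, of f] infsum_reindex_bij_betw[OF shift, of f]
      assms by simp_all
qed

lemma jbr_pos [simp]: "jbr k > 0" and jbr_nonzero [simp]: "jbr k \<noteq> 0" and jbr_ge_1: "jbr k \<ge> 1"
  by (auto simp: jbr_def)

lemma jbr_powr_power2 [simp]: "(jbr k powr b)\<^sup>2 = jbr k powr (2 * b)"
  using powr_power[of "jbr k" b 2] by simp

lemma jbr_powr_le_1: "e \<le> 0 \<Longrightarrow> jbr k powr e \<le> 1"
  using powr_mono[of e 0 "jbr k"] jbr_ge_1[of k] by simp

lemma summable_on_jbr_powr:
  assumes "p > 1"
  shows "(\<lambda>j. jbr j powr (- p)) summable_on UNIV"
proof -
  have "summable (\<lambda>n. real (Suc n) powr (- p))"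
    using assms summable_real_powr_iff[of "-p"] summable_Suc_iff[where f = "\<lambda>n. real n powr (-p)"] by simp
  then have "(\<lambda>n. 2 powr p * real (Suc n) powr (- p)) summable_on UNIV"
    by (intro summable_on_cmult_right summable_nonneg_imp_summable_on) auto
  then have "(\<lambda>n. jbr (int_decode n) powr (- p)) summable_on UNIV"
  proof (rule summable_on_comparison_test)
    fix n
    have "real (Suc n) / 2 \<le> jbr (int_decode n)"
      by (cases "even n") (auto simp: jbr_def int_decode_def sum_decode_def elim!: evenE oddE)
    then have "jbr (int_decode n) powr (- p) \<le> (real (Suc n) / 2) powr (- p)"
      using assms by (intro powr_mono2') auto
    also have "\<dots> = 2 powr p * real (Suc n) powr (- p)"
      by (simp add: powr_divide powr_minus_divide)
    finally show "jbr (int_decode n) powr (- p) \<le> 2 powr p * real (Suc n) powr (- p)" .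
  qed simp
  then show ?thesis
    using summable_on_reindex_bij_betw[OF bij_int_decode, of "\<lambda>j. jbr j powr (- p)"] by simp
qed

lemma jbr_diff_powr_le:
  assumes "0 \<le> a"
  shows "jbr (n - j) powr a \<le> 2 powr a * (if \<bar>n\<bar> < \<bar>j\<bar> then jbr j powr a else jbr n powr a)"
proof -
  have "jbr (n - j) \<le> 2 * (if \<bar>n\<bar> < \<bar>j\<bar> then jbr j else jbr n)"
    by (auto simp: jbr_def)
  then have "jbr (n - j) powr a \<le> (2 * (if \<bar>n\<bar> < \<bar>j\<bar> then jbr j else jbr n)) powr a"
    using assms by (intro powr_mono2) (auto simp: jbr_def)
  then show ?thesis
    by (cases "\<bar>n\<bar> < \<bar>j\<bar>") (simp_all add: powr_mult)
qed

lemma sum_jbr_powr_below_le: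
  assumes "0 \<le> a" "a \<le> M" "1 \<le> M"
  obtains C where "\<And>j. (\<Sum>n | \<bar>n\<bar> < \<bar>j\<bar>. jbr n powr (- 2 * a)) \<le> C * jbr j powr (2 * M - 2 * a)"
proof (cases "a > 1/2")
  case True
  define C where "C = (\<Sum>\<^sub>\<infinity>n. jbr n powr (- 2 * a))"
  have "(\<lambda>n. jbr n powr (- (2 * a))) summable_on UNIV"
    using True by (intro summable_on_jbr_powr) simp
  then have summable: "(\<lambda>n. jbr n powr (- 2 * a)) summable_on UNIV"
    by simp
  show ?thesis
  proof (rule that)
    fix j :: int
    have "finite {n. \<bar>n\<bar> < \<bar>j\<bar>}"
      by (rule finite_subset[of _ "{-\<bar>j\<bar>..\<bar>j\<bar>}"]) auto
    then have "(\<Sum>n | \<bar>n\<bar> < \<bar>j\<bar>. jbr n powr (- 2 * a)) \<le> C"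
      unfolding C_def by (rule finite_sum_le_infsum[OF summable]) auto
    also have "C \<le> C * jbr j powr (2 * M - 2 * a)"
    proof -
      have "1 \<le> jbr j powr (2 * M - 2 * a)"
        using assms jbr_ge_1[of j] by (intro ge_one_powr_ge_zero) auto
      moreover have "0 \<le> C"
        unfolding C_def by (simp add: infsum_nonneg)
      ultimately show ?thesis
        using mult_left_mono[of 1 _ C] by simp
    qed
    finally show "(\<Sum>n | \<bar>n\<bar> < \<bar>j\<bar>. jbr n powr (- 2 * a)) \<le> C * jbr j powr (2 * M - 2 * a)" .
  qed
next
  case False
  show ?thesis
  proof (rule that[of 2])
    fix j :: int
    have "(\<Sum>n | \<bar>n\<bar> < \<bar>j\<bar>. jbr n powr (- 2 * a)) \<le> (\<Sum>n | \<bar>n\<bar> < \<bar>j\<bar>. 1)"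
      using assms by (intro sum_mono jbr_powr_le_1) auto
    also have "\<dots> \<le> (\<Sum>n\<in>{-\<bar>j\<bar>..\<bar>j\<bar>}. 1)"
      by (intro sum_mono2) auto
    also have "\<dots> \<le> 2 * jbr j"
      by (simp add: jbr_def)
    also have "jbr j \<le> jbr j powr (2 * M - 2 * a)"
      using False assms jbr_ge_1[of j] powr_mono[of 1 "2 * M - 2 * a" "jbr j"] by simp
    finally show "(\<Sum>n | \<bar>n\<bar> < \<bar>j\<bar>. jbr n powr (- 2 * a)) \<le> 2 * jbr j powr (2 * M - 2 * a)"
      by simp
  qed
qed

section \<open>Multiplication by a potential in \<open>H\<^sup>-\<^sup>a\<close>\<close>

lemma summable_on_square_convolution:
  fixes A U c :: "int \<Rightarrow> real"
  assumes A0: "\<And>k. A k \<ge> 0" and U0: "\<And>k. U k \<ge> 0" and c0: "\<And>k. c k \<ge> 0"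
    and A2: "(\<lambda>k. (A k)\<^sup>2) summable_on UNIV" and U2: "(\<lambda>k. (U k)\<^sup>2) summable_on UNIV"
    and c2: "(\<lambda>k. (c k)\<^sup>2) summable_on UNIV"
  shows "(\<lambda>n. (\<Sum>\<^sub>\<infinity>j. A (n - j) * U j * c j)\<^sup>2) summable_on UNIV"
proof -
  define SA where "SA = (\<Sum>\<^sub>\<infinity>k. (A k)\<^sup>2)"
  define R where "R n = (\<Sum>\<^sub>\<infinity>j. (A (n - j) * U j)\<^sup>2)" for n
  have A_le: "(A k)\<^sup>2 \<le> SA" for k
    using finite_sum_le_infsum[OF A2, of "{k}"] by (simp add: SA_def)
  have R_summable: "(\<lambda>j. (A (n - j) * U j)\<^sup>2) summable_on UNIV" for n
  proof (rule summable_on_comparison_test[OF summable_on_cmult_right[OF U2, of SA]])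
    show "(A (n - j) * U j)\<^sup>2 \<le> SA * (U j)\<^sup>2" for j
      unfolding power_mult_distrib by (rule mult_right_mono[OF A_le]) simp
  qed simp
  have bound: "(\<Sum>\<^sub>\<infinity>j. A (n - j) * U j * c j)\<^sup>2 \<le> R n * (\<Sum>\<^sub>\<infinity>j. (c j)\<^sup>2)" for n
    using Cauchy_Schwarz_infsum(2)[of "\<lambda>j. A (n - j) * U j" c UNIV] A0 U0 c0 R_summable c2
    by (simp add: R_def)
  have "R summable_on UNIV"
    unfolding R_def
  proof (rule summable_on_infsum_nonneg_swap)
    have "(\<Sum>\<^sub>\<infinity>n. (A (n - j) * U j)\<^sup>2) = SA * (U j)\<^sup>2" for j
      using int_shift_summable_on(4)[OF A2, of j] infsum_cmult_left'[where f = "\<lambda>n. (A (n - j))\<^sup>2" and c = "(U j)\<^sup>2"]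
      by (simp add: power_mult_distrib SA_def)
    then show "(\<lambda>j. \<Sum>\<^sub>\<infinity>n. (A (n - j) * U j)\<^sup>2) summable_on UNIV"
      using summable_on_cmult_right[OF U2] by simp
    show "(\<lambda>n. (A (n - j) * U j)\<^sup>2) summable_on UNIV" for j
      using summable_on_cmult_left[OF int_shift_summable_on(3)[OF A2, where n = j], where c = "(U j)\<^sup>2"]
      by (simp add: power_mult_distrib)
  qed simp
  then show ?thesis
  proof (rule summable_on_comparison_test[OF summable_on_cmult_left])
    show "(\<Sum>\<^sub>\<infinity>j. A (n - j) * U j * c j)\<^sup>2 \<le> R n * (\<Sum>\<^sub>\<infinity>j. (c j)\<^sup>2)" for n
      by (rule bound)
  qed simp
qed

lemma weighted_column_summable_le:
  fixes y a M C :: real and j :: int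
  defines "F \<equiv> \<lambda>n. jbr n powr (- 2 * a) * (if \<bar>n\<bar> < \<bar>j\<bar> then y * jbr j powr (a - M) else 0)\<^sup>2"
  assumes C: "(\<Sum>n | \<bar>n\<bar> < \<bar>j\<bar>. jbr n powr (- 2 * a)) \<le> C * jbr j powr (2 * M - 2 * a)"
  shows "F summable_on UNIV \<and> (\<Sum>\<^sub>\<infinity>n. F n) \<le> C * y\<^sup>2"
proof -
  define S where "S = {n. \<bar>n\<bar> < \<bar>j\<bar>}"
  have "finite S"
    unfolding S_def by (rule finite_subset[of _ "{-\<bar>j\<bar>..\<bar>j\<bar>}"]) auto
  have outside: "F n = 0" if "n \<notin> S" for n
    using that by (simp add: F_def S_def)
  have "F summable_on UNIV"
    using summable_on_cong_neutral[of UNIV S F F] outside \<open>finite S\<close> by simp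
  have "(\<Sum>\<^sub>\<infinity>n. F n) = (\<Sum>n\<in>S. F n)"
    using infsum_cong_neutral[of UNIV S F F] outside \<open>finite S\<close> by simp
  also have "\<dots> = (\<Sum>n\<in>S. jbr n powr (- 2 * a) * (y\<^sup>2 * jbr j powr (2 * a - 2 * M)))"
    unfolding F_def by (intro sum.cong) (simp_all add: S_def power_mult_distrib)
  also have "\<dots> = (\<Sum>n\<in>S. jbr n powr (- 2 * a)) * (y\<^sup>2 * jbr j powr (2 * a - 2 * M))"
    by (rule sum_distrib_right[symmetric])
  also have "\<dots> \<le> C * jbr j powr (2 * M - 2 * a) * (y\<^sup>2 * jbr j powr (2 * a - 2 * M))"
    using C by (intro mult_right_mono) (simp_all add: S_def)
  also have "\<dots> = C * y\<^sup>2"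
    by (simp add: powr_add[symmetric])
  finally show ?thesis
    using \<open>F summable_on UNIV\<close> by simp
qed

lemma summable_on_weighted_square_tail_convolution:
  fixes A U :: "int \<Rightarrow> real" and a M :: real
  assumes A0: "\<And>k. A k \<ge> 0" and U0: "\<And>k. U k \<ge> 0"
    and A2: "(\<lambda>k. (A k)\<^sup>2) summable_on UNIV" and U2: "(\<lambda>k. (U k)\<^sup>2) summable_on UNIV"
    and a: "0 \<le> a" "a \<le> M" and M: "1 \<le> M"
  shows "(\<lambda>n. jbr n powr (- 2 * a) *
           (\<Sum>\<^sub>\<infinity>j. A (n - j) * (if \<bar>n\<bar> < \<bar>j\<bar> then U j * jbr j powr (a - M) else 0))\<^sup>2)
         summable_on UNIV"
proof -
  define Y where "Y n j = (if \<bar>n\<bar> < \<bar>j\<bar> then U j * jbr j powr (a - M) else 0)" for n j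
  define SA where "SA = (\<Sum>\<^sub>\<infinity>k. (A k)\<^sup>2)"
  have Y0: "Y n j \<ge> 0" for n j
    using U0 by (simp add: Y_def)
  have "Y n j \<le> U j" for n j
    using U0[of j] jbr_powr_le_1[of "a - M" j] a by (simp add: Y_def mult_left_le)
  then have Y2: "(\<lambda>j. (Y n j)\<^sup>2) summable_on UNIV" for n
    by (intro summable_on_comparison_test[OF U2] power_mono) (simp_all add: Y0)
  have CS: "(\<Sum>\<^sub>\<infinity>j. A (n - j) * Y n j)\<^sup>2 \<le> SA * (\<Sum>\<^sub>\<infinity>j. (Y n j)\<^sup>2)" for n
    using Cauchy_Schwarz_infsum(2)[of "\<lambda>j. A (n - j)" "Y n" UNIV] A0 Y0 Y2
      int_shift_summable_on(1,2)[OF A2, of n] by (simp add: SA_def)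
  obtain C where C: "\<And>j. (\<Sum>n | \<bar>n\<bar> < \<bar>j\<bar>. jbr n powr (- 2 * a)) \<le> C * jbr j powr (2 * M - 2 * a)"
    using sum_jbr_powr_below_le[OF a M] by blast
  have column: "(\<lambda>n. jbr n powr (- 2 * a) * (Y n j)\<^sup>2) summable_on UNIV \<and>
      (\<Sum>\<^sub>\<infinity>n. jbr n powr (- 2 * a) * (Y n j)\<^sup>2) \<le> C * (U j)\<^sup>2" for j
    unfolding Y_def by (rule weighted_column_summable_le[OF C])
  have "(\<lambda>n. \<Sum>\<^sub>\<infinity>j. jbr n powr (- 2 * a) * (Y n j)\<^sup>2) summable_on UNIV"
  proof (rule summable_on_infsum_nonneg_swap)
    show "(\<lambda>j. \<Sum>\<^sub>\<infinity>n. jbr n powr (- 2 * a) * (Y n j)\<^sup>2) summable_on UNIV"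
      using column by (intro summable_on_comparison_test[OF summable_on_cmult_right[OF U2, of C]])
        (auto intro: infsum_nonneg)
  qed (use column in simp_all)
  then have "(\<lambda>n. SA * (\<Sum>\<^sub>\<infinity>j. jbr n powr (- 2 * a) * (Y n j)\<^sup>2)) summable_on UNIV"
    by (rule summable_on_cmult_right)
  then show ?thesis
  proof (rule summable_on_comparison_test)
    fix n
    have "jbr n powr (- 2 * a) * (\<Sum>\<^sub>\<infinity>j. A (n - j) * Y n j)\<^sup>2
        \<le> jbr n powr (- 2 * a) * (SA * (\<Sum>\<^sub>\<infinity>j. (Y n j)\<^sup>2))"
      using CS by (rule mult_left_mono) simp
    also have "\<dots> = SA * (\<Sum>\<^sub>\<infinity>j. jbr n powr (- 2 * a) * (Y n j)\<^sup>2)"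
      by (simp add: infsum_cmult_right')
    finally show "jbr n powr (- 2 * a) *
        (\<Sum>\<^sub>\<infinity>j. A (n - j) * (if \<bar>n\<bar> < \<bar>j\<bar> then U j * jbr j powr (a - M) else 0))\<^sup>2
        \<le> SA * (\<Sum>\<^sub>\<infinity>j. jbr n powr (- 2 * a) * (Y n j)\<^sup>2)"
      by (simp add: Y_def)
  qed simp
qed

definition sobolev_summable :: "real \<Rightarrow> (int \<Rightarrow> complex) \<Rightarrow> bool" where
  "sobolev_summable s f \<longleftrightarrow> (\<lambda>n. jbr n powr (2 * s) * (cmod (f n))\<^sup>2) summable_on UNIV"

lemma Hsp_iff_sobolev_summable:
  "f \<in> Hsp pm s \<longleftrightarrow> (\<forall>n. n \<notin> freqs pm \<longrightarrow> f n = 0) \<and> sobolev_summable s f"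
proof -
  have "(\<lambda>n. jbr n powr (2 * s) * (cmod (f n))\<^sup>2) summable_on freqs pm
      \<longleftrightarrow> (\<lambda>n. jbr n powr (2 * s) * (cmod (f n))\<^sup>2) summable_on UNIV"
    if "\<forall>n. n \<notin> freqs pm \<longrightarrow> f n = 0"
    by (rule summable_on_cong_neutral) (use that in auto)
  then show ?thesis
    unfolding Hsp_def sobolev_summable_def by blast
qed

lemma norm_convolution_term_le:
  fixes V u :: "int \<Rightarrow> complex" and a M :: real
  defines "A \<equiv> \<lambda>k. jbr k powr (- a) * cmod (V k)" and "U \<equiv> \<lambda>j. jbr j powr M * cmod (u j)"
  assumes "0 \<le> a"
  shows "cmod (V (n - j) * u j)
    \<le> 2 powr a * (jbr n powr a * (A (n - j) * U j * jbr j powr (- M))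
        + A (n - j) * (if \<bar>n\<bar> < \<bar>j\<bar> then U j * jbr j powr (a - M) else 0))"
proof -
  have "cmod (V (n - j) * u j) = A (n - j) * U j * jbr j powr (- M) * jbr (n - j) powr a"
    by (simp add: A_def U_def norm_mult powr_minus field_simps)
  also have "\<dots> \<le> A (n - j) * U j * jbr j powr (- M)
      * (2 powr a * (if \<bar>n\<bar> < \<bar>j\<bar> then jbr j powr a else jbr n powr a))"
    using jbr_diff_powr_le[OF assms(3)] by (intro mult_left_mono) (simp_all add: A_def U_def)
  also have "\<dots> \<le> 2 powr a * (jbr n powr a * (A (n - j) * U j * jbr j powr (- M))
        + A (n - j) * (if \<bar>n\<bar> < \<bar>j\<bar> then U j * jbr j powr (a - M) else 0))"
    by (cases "\<bar>n\<bar> < \<bar>j\<bar>") (simp_all add: A_def U_def powr_diff powr_minus field_simps)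
  finally show ?thesis .
qed

lemma norm_fmult_le:
  fixes V u :: "int \<Rightarrow> complex" and a M :: real
  defines "A \<equiv> \<lambda>k. jbr k powr (- a) * cmod (V k)" and "U \<equiv> \<lambda>j. jbr j powr M * cmod (u j)"
  assumes a: "0 \<le> a" "a \<le> M"
    and A2: "(\<lambda>k. (A k)\<^sup>2) summable_on UNIV" and U2: "(\<lambda>k. (U k)\<^sup>2) summable_on UNIV"
  shows "cmod (fmult V u n)
    \<le> 2 powr a * (jbr n powr a * (\<Sum>\<^sub>\<infinity>j. A (n - j) * U j * jbr j powr (- M))
        + (\<Sum>\<^sub>\<infinity>j. A (n - j) * (if \<bar>n\<bar> < \<bar>j\<bar> then U j * jbr j powr (a - M) else 0)))"
proof -
  define Y where "Y j = (if \<bar>n\<bar> < \<bar>j\<bar> then U j * jbr j powr (a - M) else 0)" for j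
  have A0: "A k \<ge> 0" and U0: "U k \<ge> 0" for k
    by (simp_all add: A_def U_def)
  have AU: "(\<lambda>j. A (n - j) * U j) summable_on UNIV"
    using Cauchy_Schwarz_infsum(1)[OF A0 U0 int_shift_summable_on(1)[OF A2] U2] .
  have P_summable: "(\<lambda>j. A (n - j) * U j * jbr j powr (- M)) summable_on UNIV"
    using A0 U0 jbr_powr_le_1[of "- M"] a
    by (intro summable_on_comparison_test[OF AU]) (auto intro: mult_left_le)
  have Q_summable: "(\<lambda>j. A (n - j) * Y j) summable_on UNIV"
    using A0 U0 jbr_powr_le_1[of "a - M"] a
    by (intro summable_on_comparison_test[OF AU]) (auto simp: Y_def intro!: mult_left_mono mult_left_le)
  define K where "K j = 2 powr a * (jbr n powr a * (A (n - j) * U j * jbr j powr (- M)) + A (n - j) * Y j)" for j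
  have K_summable: "K summable_on UNIV"
    unfolding K_def by (intro summable_on_cmult_right summable_on_add P_summable Q_summable)
  have term_le: "norm (V (n - j) * u j) \<le> K j" for j
    unfolding K_def Y_def A_def U_def by (rule norm_convolution_term_le[OF a(1)])
  have norm_summable: "(\<lambda>j. norm (V (n - j) * u j)) summable_on UNIV"
    by (rule summable_on_comparison_test[OF K_summable term_le]) simp
  have "cmod (fmult V u n) \<le> (\<Sum>\<^sub>\<infinity>j. norm (V (n - j) * u j))"
    unfolding fmult_def by (rule norm_infsum_bound[OF norm_summable])
  also have "\<dots> \<le> (\<Sum>\<^sub>\<infinity>j. K j)"
    by (rule infsum_mono[OF norm_summable K_summable term_le])
  also have "\<dots> = 2 powr a * (jbr n powr a * (\<Sum>\<^sub>\<infinity>j. A (n - j) * U j * jbr j powr (- M))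
      + (\<Sum>\<^sub>\<infinity>j. A (n - j) * Y j))"
    unfolding K_def
    by (simp add: infsum_cmult_right' infsum_add summable_on_cmult_right P_summable Q_summable)
  finally show ?thesis
    by (simp add: Y_def)
qed

lemma sobolev_summable_fmult:
  fixes V u :: "int \<Rightarrow> complex" and a M :: real
  assumes M: "1 \<le> M" and a: "0 \<le> a" "a \<le> M"
    and V: "sobolev_summable (- a) V" and u: "sobolev_summable M u"
  shows "sobolev_summable (- a) (fmult V u)"
proof -
  define A where "A = (\<lambda>k. jbr k powr (- a) * cmod (V k))"
  define U where "U = (\<lambda>j. jbr j powr M * cmod (u j))"
  define P where "P n = (\<Sum>\<^sub>\<infinity>j. A (n - j) * U j * jbr j powr (- M))" for n
  define Q where "Q n = (\<Sum>\<^sub>\<infinity>j. A (n - j) * (if \<bar>n\<bar> < \<bar>j\<bar> then U j * jbr j powr (a - M) else 0))" for n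
  have A0: "A k \<ge> 0" and U0: "U k \<ge> 0" for k
    by (simp_all add: A_def U_def)
  have A2: "(\<lambda>k. (A k)\<^sup>2) summable_on UNIV"
    using V by (simp add: sobolev_summable_def A_def power_mult_distrib)
  have U2: "(\<lambda>k. (U k)\<^sup>2) summable_on UNIV"
    using u by (simp add: sobolev_summable_def U_def power_mult_distrib)
  have fmult_le: "cmod (fmult V u n) \<le> 2 powr a * (jbr n powr a * P n + Q n)" for n
    unfolding P_def Q_def A_def U_def by (rule norm_fmult_le[OF a A2[unfolded A_def] U2[unfolded U_def]])
  have weighted_le: "jbr n powr (2 * - a) * (cmod (fmult V u n))\<^sup>2
      \<le> 2 * (2 powr a)\<^sup>2 * ((P n)\<^sup>2 + jbr n powr (- 2 * a) * (Q n)\<^sup>2)" for n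
  proof -
    define x where "x = jbr n powr a * P n"
    have "x \<ge> 0" "Q n \<ge> 0"
      using A0 U0 by (simp_all add: x_def P_def Q_def infsum_nonneg)
    then have "(cmod (fmult V u n))\<^sup>2 \<le> (2 powr a)\<^sup>2 * (x + Q n)\<^sup>2"
      using fmult_le[of n] by (simp add: x_def power_mult_distrib[symmetric] power_mono)
    also have "\<dots> \<le> (2 powr a)\<^sup>2 * (2 * (x\<^sup>2 + (Q n)\<^sup>2))"
      using sum_squares_bound[of x "Q n"] by (intro mult_left_mono) (simp_all add: power2_sum)
    finally have "jbr n powr (2 * - a) * (cmod (fmult V u n))\<^sup>2
        \<le> jbr n powr (2 * - a) * ((2 powr a)\<^sup>2 * (2 * (x\<^sup>2 + (Q n)\<^sup>2)))"
      by (rule mult_left_mono) simp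
    also have "\<dots> = 2 * (2 powr a)\<^sup>2 * (jbr n powr (- 2 * a) * x\<^sup>2 + jbr n powr (- 2 * a) * (Q n)\<^sup>2)"
      by (simp add: algebra_simps)
    also have "jbr n powr (- 2 * a) * x\<^sup>2 = (P n)\<^sup>2"
      by (simp add: x_def power_mult_distrib powr_add[symmetric])
    finally show ?thesis .
  qed
  have "(\<lambda>n. (P n)\<^sup>2) summable_on UNIV"
    unfolding P_def using A0 U0 A2 U2 summable_on_jbr_powr[of "2 * M"] M
    by (intro summable_on_square_convolution) auto
  moreover have "(\<lambda>n. jbr n powr (- 2 * a) * (Q n)\<^sup>2) summable_on UNIV"
    unfolding Q_def using summable_on_weighted_square_tail_convolution[OF A0 U0 A2 U2 a M] .
  ultimately have "(\<lambda>n. 2 * (2 powr a)\<^sup>2 * ((P n)\<^sup>2 + jbr n powr (- 2 * a) * (Q n)\<^sup>2)) summable_on UNIV"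
    by (intro summable_on_cmult_right summable_on_add)
  then show ?thesis
    unfolding sobolev_summable_def by (rule summable_on_comparison_test) (use weighted_le in simp_all)
qed

section \<open>Inverting \<open>D\<^sup>2\<^sup>m\<close>\<close>

lemma jbr_pow_le_Dpow_symbol:
  assumes "n \<noteq> 0"
  shows "jbr n ^ (2 * m) \<le> 4 ^ m * (real_of_int n * pi) ^ (2 * m)"
proof -
  have "jbr n / 2 \<le> \<bar>real_of_int n\<bar>"
    using assms by (simp add: jbr_def)
  also have "\<dots> \<le> \<bar>real_of_int n * pi\<bar>"
    using pi_ge_two by (simp add: abs_mult mult_le_cancel_left1)
  finally have "(jbr n / 2) ^ (2 * m) \<le> \<bar>real_of_int n * pi\<bar> ^ (2 * m)"
    by (rule power_mono) (simp add: less_imp_le)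
  then have "(jbr n / 2) ^ (2 * m) \<le> (real_of_int n * pi) ^ (2 * m)"
    by (simp only: power_even_abs even_mult_iff even_numeral simp_thms)
  moreover have "jbr n ^ (2 * m) = 4 ^ m * (jbr n / 2) ^ (2 * m)"
    by (simp add: power_divide power_mult)
  ultimately show ?thesis
    by simp
qed

lemma weighted_norm_le_of_Dpow_eq:
  fixes x g h :: complex
  assumes "n \<noteq> 0" "0 \<le> a"
    and eq: "complex_of_real ((real_of_int n * pi) ^ (2 * m)) * x = g - h"
  shows "jbr n powr (2 * (2 * real m - a)) * (cmod x)\<^sup>2
    \<le> 2 * 16 ^ m * ((cmod g)\<^sup>2 + jbr n powr (2 * - a) * (cmod h)\<^sup>2)"
proof -
  define w where "w = jbr n powr (2 * - a)"
  have "0 \<le> w" "w \<le> 1"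
    using \<open>0 \<le> a\<close> by (simp_all add: w_def jbr_powr_le_1)
  have symbol: "(real_of_int n * pi) ^ (2 * m) * cmod x = cmod (g - h)"
    using arg_cong[OF eq, of norm] zero_le_even_power[of "2 * m" "real_of_int n * pi"]
    by (simp only: norm_mult norm_of_real abs_of_nonneg even_mult_iff even_numeral simp_thms)
  have "jbr n ^ (2 * m) * cmod x \<le> 4 ^ m * (real_of_int n * pi) ^ (2 * m) * cmod x"
    by (rule mult_right_mono[OF jbr_pow_le_Dpow_symbol[OF \<open>n \<noteq> 0\<close>]]) simp
  also have "\<dots> = 4 ^ m * cmod (g - h)"
    using symbol by (simp add: mult.assoc)
  also have "\<dots> \<le> 4 ^ m * (cmod g + cmod h)"
    by (intro mult_left_mono norm_triangle_ineq4) simp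
  finally have bound: "jbr n ^ (2 * m) * cmod x \<le> 4 ^ m * (cmod g + cmod h)" .
  have "(jbr n ^ (2 * m))\<^sup>2 = jbr n powr (2 * (2 * real m))"
    using powr_realpow[OF jbr_pos, of n "2 * m"] jbr_powr_power2[of n "2 * real m"] by simp
  then have "jbr n powr (2 * (2 * real m - a)) * (cmod x)\<^sup>2 = w * (jbr n ^ (2 * m) * cmod x)\<^sup>2"
    by (simp add: w_def power_mult_distrib powr_add[symmetric] algebra_simps)
  also have "\<dots> \<le> w * (4 ^ m * (cmod g + cmod h))\<^sup>2"
    using bound \<open>0 \<le> w\<close> by (intro mult_left_mono power_mono) simp_all
  also have "\<dots> \<le> w * (16 ^ m * (2 * ((cmod g)\<^sup>2 + (cmod h)\<^sup>2)))"
  proof (rule mult_left_mono)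
    have "((4::real) ^ m)\<^sup>2 = 16 ^ m"
      by (simp add: power2_eq_square flip: power_mult_distrib)
    then show "(4 ^ m * (cmod g + cmod h))\<^sup>2 \<le> 16 ^ m * (2 * ((cmod g)\<^sup>2 + (cmod h)\<^sup>2))"
      using sum_squares_bound[of "cmod g" "cmod h"] by (simp add: power_mult_distrib power2_sum)
  qed (rule \<open>0 \<le> w\<close>)
  also have "\<dots> = 2 * 16 ^ m * (w * (cmod g)\<^sup>2 + w * (cmod h)\<^sup>2)"
    by (simp add: algebra_simps)
  also have "\<dots> \<le> 2 * 16 ^ m * ((cmod g)\<^sup>2 + w * (cmod h)\<^sup>2)"
    using \<open>0 \<le> w\<close> \<open>w \<le> 1\<close> by (intro mult_left_mono add_right_mono mult_left_le_one_le) simp_all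
  finally show ?thesis
    by (simp add: w_def)
qed

lemma sobolev_summable_of_Dpow_add:
  fixes u h :: "int \<Rightarrow> complex"
  assumes "0 \<le> a"
    and L2: "sobolev_summable 0 (\<lambda>n. Dpow m u n + h n)" and h: "sobolev_summable (- a) h"
  shows "sobolev_summable (2 * real m - a) u"
proof -
  define g where "g n = Dpow m u n + h n" for n
  have "(\<lambda>n. (cmod (g n))\<^sup>2) summable_on UNIV"
    using L2 by (simp add: sobolev_summable_def g_def)
  moreover have "(\<lambda>n. jbr n powr (2 * - a) * (cmod (h n))\<^sup>2) summable_on UNIV"
    using h by (simp add: sobolev_summable_def)
  ultimately have "(\<lambda>n. 2 * 16 ^ m * ((cmod (g n))\<^sup>2 + jbr n powr (2 * - a) * (cmod (h n))\<^sup>2)) summable_on UNIV"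
    by (intro summable_on_cmult_right summable_on_add)
  then have "(\<lambda>n. 2 * 16 ^ m * ((cmod (g n))\<^sup>2 + jbr n powr (2 * - a) * (cmod (h n))\<^sup>2)) summable_on UNIV - {0}"
    by (rule summable_on_subset_banach) simp
  then have "(\<lambda>n. jbr n powr (2 * (2 * real m - a)) * (cmod (u n))\<^sup>2) summable_on UNIV - {0}"
  proof (rule summable_on_comparison_test)
    fix n :: int assume "n \<in> UNIV - {0}"
    moreover have "complex_of_real ((real_of_int n * pi) ^ (2 * m)) * u n = g n - h n"
      by (simp add: g_def Dpow_def)
    ultimately show "jbr n powr (2 * (2 * real m - a)) * (cmod (u n))\<^sup>2
        \<le> 2 * 16 ^ m * ((cmod (g n))\<^sup>2 + jbr n powr (2 * - a) * (cmod (h n))\<^sup>2)"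
      using weighted_norm_le_of_Dpow_eq[OF _ \<open>0 \<le> a\<close>] by simp
  qed simp
  then have "(\<lambda>n. jbr n powr (2 * (2 * real m - a)) * (cmod (u n))\<^sup>2) summable_on insert 0 (UNIV - {0})"
    by (rule summable_on_insert_iff[THEN iffD2])
  then show ?thesis
    unfolding sobolev_summable_def by (simp add: insert_absorb)
qed

theorem theorem2:
  fixes m :: nat and \<alpha> :: real and V :: "int \<Rightarrow> complex" and pm :: bool
  assumes "m \<ge> 1"
    and "0 \<le> \<alpha>" and "\<alpha> \<le> 1"
    and "V \<in> Hsp True (- (real m * \<alpha>))"
  shows "DomS pm m V \<subseteq> Hsp pm (real m * (2 - \<alpha>))"
proof
  fix u assume "u \<in> DomS pm m V"
  then have u: "u \<in> Hsp pm (real m)" and g: "(\<lambda>n. Dpow m u n + fmult V u n) \<in> Hsp pm 0"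
    by (simp_all add: DomS_def)
  have a: "0 \<le> real m * \<alpha>" "real m * \<alpha> \<le> real m"
    using assms by (simp_all add: mult_left_le)
  have "sobolev_summable (- (real m * \<alpha>)) (fmult V u)"
    using assms(1,4) u a by (intro sobolev_summable_fmult[where M = "real m"]) (simp_all add: Hsp_iff_sobolev_summable)
  then have "sobolev_summable (2 * real m - real m * \<alpha>) u"
    using g a by (intro sobolev_summable_of_Dpow_add) (simp_all add: Hsp_iff_sobolev_summable)
  moreover have "2 * real m - real m * \<alpha> = real m * (2 - \<alpha>)"
    by (simp add: algebra_simps)
  ultimately show "u \<in> Hsp pm (real m * (2 - \<alpha>))"
    using u by (simp add: Hsp_iff_sobolev_summable)
qed

end
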